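(* Let $B>0$, $\epsilon\in(0,2B)$ and $c=\frac{1}{2B-\epsilon}$ (so $c>\frac{1}{2B}$). Define $f(z)=\operatorname{sinc}(\epsilon z)e^{\pi i(2B-\epsilon)z}$ and $g(z)=\operatorname{sinc}(\epsilon z)e^{-\pi i(2B-\epsilon)z}$ for $z\in\mathbb{C}$. Then $f,g\in\mathrm{PW}^2_B$ (explicitly, $f(z)=\frac1\epsilon\int_{-B}^B\chi_{[B-\epsilon,B]}(\xi)e^{2\pi i\xi z}\,d\xi$ and $g(z)=\frac1\epsilon\int_{-B}^B\chi_{[-B,-B+\epsilon]}(\xi)e^{2\pi i\xi z}\,d\xi$), and for all $t\in\mathbb{R}$ we have $|f(t)|=|g(t)|$ and $f(t)\overline{f(t-c)}=g(t)\overline{g(t-c)}$, but there is no $\alpha\in\mathbb{R}$ with $f=e^{i\alpha}g$.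
   Context: $\operatorname{sinc}(z)=\frac{\sin(\pi z)}{\pi z}$ for $z\neq0$ and $\operatorname{sinc}(0)=1$. For $B>0$, the Paley--Wiener space is $\mathrm{PW}^2_B:=\{f:\mathbb{C}\to\mathbb{C} \mid \exists F\in L^2([-B,B])\ \forall z\in\mathbb{C}: f(z)=\int_{-B}^B F(\xi)e^{2\pi i \xi z}\,d\xi\}$. $\chi_I$ denotes the indicator function of the set $I$. *)

theory Defs
  imports "HOL-Analysis.Analysis"
begin

definition sinc :: "complex \<Rightarrow> complex" where
  "sinc z = (if z = 0 then 1 else sin (of_real pi * z) / (of_real pi * z))"

definition PW2 :: "real \<Rightarrow> (complex \<Rightarrow> complex) set" where
  "PW2 B = {f. \<exists>F :: real \<Rightarrow> complex.
      F \<in> borel_measurable (lebesgue_on {-B..B}) \<and>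
      integrable (lebesgue_on {-B..B}) (\<lambda>\<xi>. (norm (F \<xi>))\<^sup>2) \<and>
      (\<forall>z. f z = integral\<^sup>L (lebesgue_on {-B..B})
                    (\<lambda>\<xi>. F \<xi> * exp (2 * of_real pi * \<i> * of_real \<xi> * z)))}"

end

(*
  The Fourier transform of the indicator of [a, b] is (b - a) sinc((b - a) z) e^{\<pi> i (a + b) z},
  so f and g are (1/\<epsilon> times) transforms of indicators of the two end intervals of length \<epsilon>
  in [-B, B].  On the real line sinc is real, hence f and g differ only by the conjugate phases
  e^{\<plusminus>\<pi> i r t} with r = 2B - \<epsilon>: their moduli agree, and in f(t) conj f(t - c) these phases
  leave e^{\<plusminus>\<pi> i r c} = -1, the same for both.  A unimodular constant with f = e^{i\<alpha>} g would
  have to be 1 (look at z = 0), yet at z = i the phases become the distinct reals e^{\<mp>\<pi> r}.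
*)

theory Submission
  imports Defs
begin

lemma has_integral_exp_of_real_mult:
  fixes w :: complex and a b :: real
  assumes "a \<le> b" "w \<noteq> 0"
  shows "((\<lambda>\<xi>. exp (of_real \<xi> * w)) has_integral (exp (of_real b * w) - exp (of_real a * w)) / w) {a..b}"
proof -
  have "((\<lambda>\<xi>. exp (of_real \<xi> * w) / w) has_vector_derivative exp (of_real x * w)) (at x within {a..b})" for x
  proof -
    have "((\<lambda>u. exp (u * w) / w) has_field_derivative exp (of_real x * w)) (at (of_real x))"
      using assms(2) by (auto intro!: derivative_eq_intros)
    then show ?thesis by (rule has_vector_derivative_real_field)
  qed
  then have "((\<lambda>\<xi>. exp (of_real \<xi> * w)) has_integral exp (of_real b * w) / w - exp (of_real a * w) / w) {a..b}"
    by (intro fundamental_theorem_of_calculus[OF assms(1)]) auto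
  then show ?thesis by (simp add: diff_divide_distrib)
qed

lemma integral_indicator_mult_lebesgue_on:
  fixes h :: "real \<Rightarrow> complex"
  assumes "continuous_on {a..b} h" "-B \<le> a" "b \<le> B"
  shows "integral\<^sup>L (lebesgue_on {-B..B}) (\<lambda>\<xi>. indicator {a..b} \<xi> * h \<xi>) = integral {a..b} h"
proof -
  have "integral\<^sup>L (lebesgue_on {-B..B}) (\<lambda>\<xi>. indicator {a..b} \<xi> * h \<xi>)
      = integral\<^sup>L (lebesgue_on {-B..B}) (\<lambda>\<xi>. if \<xi> \<in> {a..b} then h \<xi> else 0)"
    by (rule Bochner_Integration.integral_cong) (auto simp: indicator_def)
  also have "\<dots> = integral\<^sup>L (lebesgue_on {a..b}) h"
    using assms by (intro integral_restrict) auto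
  also have "\<dots> = integral {a..b} h"
  proof -
    have "(h has_integral integral\<^sup>L (lebesgue_on {a..b}) h) {a..b}"
      using assms(1) by (intro has_integral_integral_lebesgue_on continuous_imp_integrable_real) auto
    then show ?thesis by (simp add: integral_unique)
  qed
  finally show ?thesis .
qed

lemma sinc_eq_0_iff: "sinc z = 0 \<longleftrightarrow> (\<exists>n::int. n \<noteq> 0 \<and> z = of_int n)"
proof (cases "z = 0")
  case False
  have "sin (of_real pi * z) = 0 \<longleftrightarrow> (\<exists>n::int. z = of_int n)"
    unfolding sin_eq_0 by (auto simp: field_simps)
  with False show ?thesis by (auto simp: sinc_def)
qed (simp add: sinc_def)

lemma sinc_in_Reals: "z \<in> \<real> \<Longrightarrow> sinc z \<in> \<real>"
  by (auto simp: sinc_def simp flip: sin_of_real elim!: Reals_cases)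

lemma exp_difference_quotient_eq_sinc:
  fixes z :: complex and a b :: real
  assumes "z \<noteq> 0"
  defines "w \<equiv> 2 * of_real pi * \<i> * z"
  shows "(exp (of_real b * w) - exp (of_real a * w)) / w
    = of_real (b - a) * sinc (of_real (b - a) * z) * exp (of_real pi * \<i> * of_real (a + b) * z)"
proof (cases "a = b")
  case False
  define x where "x = of_real (b - a) * z"
  define D where "D = exp (of_real (b - a) * w / 2) - exp (- (of_real (b - a) * w / 2))"
  define E where "E = exp (of_real (a + b) * w / 2)"
  have "w \<noteq> 0" "x \<noteq> 0"
    using assms(1) False by (simp_all add: w_def x_def)
  have "of_real (a + b) * w / 2 + of_real (b - a) * w / 2 = of_real b * w"
       "of_real (a + b) * w / 2 + - (of_real (b - a) * w / 2) = of_real a * w"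
    by (simp_all add: field_simps)
  then have "(exp (of_real b * w) - exp (of_real a * w)) / w = E * D / w"
    by (simp add: E_def D_def right_diff_distrib flip: exp_add)
  also have "\<dots> = of_real (b - a) * D / (2 * \<i> * (of_real pi * x)) * E"
  proof -
    have "2 * \<i> * (of_real pi * x) = of_real (b - a) * w"
      by (simp add: x_def w_def field_simps)
    then show ?thesis
      using \<open>w \<noteq> 0\<close> False by simp
  qed
  also have "\<dots> = of_real (b - a) * sinc x * exp (of_real pi * \<i> * of_real (a + b) * z)"
  proof -
    have "\<i> * (of_real pi * x) = of_real (b - a) * w / 2"
      by (simp add: x_def w_def field_simps)
    then have sin: "sin (of_real pi * x) = D / (2 * \<i>)"
      by (simp only: sin_exp_eq D_def)
    have "of_real pi * \<i> * of_real (a + b) * z = of_real (a + b) * w / 2"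
      by (simp add: w_def)
    then have "exp (of_real pi * \<i> * of_real (a + b) * z) = E"
      by (simp only: E_def)
    then show ?thesis
      using \<open>x \<noteq> 0\<close> unfolding sinc_def sin by (simp add: field_simps)
  qed
  finally show ?thesis
    by (simp add: x_def)
qed simp

lemma fourier_transform_indicator:
  fixes z :: complex and a b B :: real
  assumes "a \<le> b" "-B \<le> a" "b \<le> B"
  shows "integral\<^sup>L (lebesgue_on {-B..B}) (\<lambda>\<xi>. indicator {a..b} \<xi> * exp (2 * of_real pi * \<i> * of_real \<xi> * z))
    = of_real (b - a) * sinc (of_real (b - a) * z) * exp (of_real pi * \<i> * of_real (a + b) * z)"
proof -
  define w where "w = 2 * of_real pi * \<i> * z"
  have "integral\<^sup>L (lebesgue_on {-B..B}) (\<lambda>\<xi>. indicator {a..b} \<xi> * exp (2 * of_real pi * \<i> * of_real \<xi> * z))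
      = integral {a..b} (\<lambda>\<xi>. exp (of_real \<xi> * w))"
    using assms(2,3) unfolding w_def
    by (subst integral_indicator_mult_lebesgue_on) (auto simp: mult_ac intro!: continuous_intros)
  also have "\<dots> = of_real (b - a) * sinc (of_real (b - a) * z) * exp (of_real pi * \<i> * of_real (a + b) * z)"
  proof (cases "z = 0")
    case True
    then show ?thesis
      using assms(1) by (simp add: w_def sinc_def content_real scaleR_conv_of_real)
  next
    case False
    then have "w \<noteq> 0"
      by (simp add: w_def)
    then have "integral {a..b} (\<lambda>\<xi>. exp (of_real \<xi> * w)) = (exp (of_real b * w) - exp (of_real a * w)) / w"
      by (intro integral_unique has_integral_exp_of_real_mult assms(1))
    also have "\<dots> = of_real (b - a) * sinc (of_real (b - a) * z) * exp (of_real pi * \<i> * of_real (a + b) * z)"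
      unfolding w_def by (rule exp_difference_quotient_eq_sinc[OF False])
    finally show ?thesis .
  qed
  finally show ?thesis .
qed

lemma conjugate_modulations_same_autocorrelation:
  fixes u v :: complex and r s t :: real
  assumes "u \<in> \<real>" "v \<in> \<real>" "r * (s - t) \<in> \<int>"
  shows "u * exp (of_real pi * \<i> * of_real r * of_real s) * cnj (v * exp (of_real pi * \<i> * of_real r * of_real t))
       = u * exp (- (of_real pi * \<i> * of_real r * of_real s)) * cnj (v * exp (- (of_real pi * \<i> * of_real r * of_real t)))"
proof -
  from assms(3) obtain n :: int where n: "r * (s - t) = of_int n"
    by (auto elim: Ints_cases)
  define p q where "p = of_real pi * \<i> * of_real r * of_real s"
    and "q = of_real pi * \<i> * of_real r * of_real t"
  have "p - q = (q - p) + of_int (2 * n) * pi * \<i>"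
    using arg_cong[OF n, of "\<lambda>x. of_real x * of_real pi * \<i> :: complex"]
    by (simp add: p_def q_def algebra_simps)
  then have "exp (p - q) = exp (q - p)"
    unfolding exp_eq by blast
  then have phase: "exp p * exp (- q) = exp (- p) * exp q"
    by (simp add: exp_diff exp_minus divide_inverse mult.commute)
  have "cnj u = u" "cnj v = v"
    using assms(1,2) by (simp_all add: Reals_cnj_iff)
  with phase show ?thesis
    by (simp add: p_def q_def exp_cnj mult_ac)
qed

lemma conjugate_modulations_not_unimodular_multiple:
  fixes h :: "complex \<Rightarrow> complex" and r :: real
  assumes "h 0 \<noteq> 0" "h \<i> \<noteq> 0" "r \<noteq> 0"
  shows "\<not> (\<exists>\<alpha>::real. (\<lambda>z. h z * exp (of_real pi * \<i> * of_real r * z))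
            = (\<lambda>z. exp (\<i> * of_real \<alpha>) * (h z * exp (- (of_real pi * \<i> * of_real r * z)))))"
proof
  assume "\<exists>\<alpha>::real. (\<lambda>z. h z * exp (of_real pi * \<i> * of_real r * z))
            = (\<lambda>z. exp (\<i> * of_real \<alpha>) * (h z * exp (- (of_real pi * \<i> * of_real r * z))))"
  then obtain \<alpha> :: real where eq: "\<And>z. h z * exp (of_real pi * \<i> * of_real r * z)
      = exp (\<i> * of_real \<alpha>) * (h z * exp (- (of_real pi * \<i> * of_real r * z)))"
    by metis
  have "exp (\<i> * of_real \<alpha>) = 1"
    using eq[of 0] assms(1) by simp
  then have "exp (of_real pi * \<i> * of_real r * \<i>) = exp (- (of_real pi * \<i> * of_real r * \<i>))"
    using eq[of \<i>] assms(2) by simp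
  moreover have "of_real pi * \<i> * of_real r * \<i> = (of_real (- (pi * r)) :: complex)"
    by (simp add: mult_ac)
  ultimately have "exp (- (pi * r)) = exp (pi * r)"
    by (metis exp_of_real minus_minus of_real_eq_iff of_real_minus)
  with assms(3) show False
    by simp
qed

lemma indicator_fourier_transform_in_PW2:
  fixes k a b B :: real
  shows "(\<lambda>z. of_real k * integral\<^sup>L (lebesgue_on {-B..B})
          (\<lambda>\<xi>. indicator {a..b} \<xi> * exp (2 * of_real pi * \<i> * of_real \<xi> * z))) \<in> PW2 B"
  unfolding PW2_def
proof (intro CollectI exI conjI allI)
  let ?F = "\<lambda>\<xi>::real. of_real k * indicator {a..b} \<xi> :: complex"
  have [measurable]: "(\<lambda>x. x) \<in> borel_measurable (lebesgue_on {-B..B})"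
    using id_borel_measurable_lebesgue_on by (simp add: id_def)
  show F_measurable: "?F \<in> borel_measurable (lebesgue_on {-B..B})"
    by measurable
  show "integrable (lebesgue_on {-B..B}) (\<lambda>\<xi>. (norm (?F \<xi>))\<^sup>2)"
  proof (rule measurable_bounded_by_integrable_imp_lebesgue_integrable)
    show "(\<lambda>\<xi>. (norm (?F \<xi>))\<^sup>2) \<in> borel_measurable (lebesgue_on {-B..B})"
      using F_measurable by measurable
    show "integrable (lebesgue_on {-B..B}) (\<lambda>_. k\<^sup>2)"
      by (intro continuous_imp_integrable_real continuous_intros)
    show "norm ((norm (?F \<xi>))\<^sup>2) \<le> k\<^sup>2" for \<xi>
      by (auto simp: indicator_def power2_eq_square)
  qed auto
  show "of_real k * integral\<^sup>L (lebesgue_on {-B..B})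
          (\<lambda>\<xi>. indicator {a..b} \<xi> * exp (2 * of_real pi * \<i> * of_real \<xi> * z)) =
        integral\<^sup>L (lebesgue_on {-B..B}) (\<lambda>\<xi>. ?F \<xi> * exp (2 * of_real pi * \<i> * of_real \<xi> * z))" for z
    by (simp add: mult.assoc)
qed

theorem mainTheorem9:
  fixes B \<epsilon> c :: real and f g :: "complex \<Rightarrow> complex"
  assumes "B > 0" and "0 < \<epsilon>" and "\<epsilon> < 2 * B"
  defines "c \<equiv> 1 / (2 * B - \<epsilon>)"
  defines "f \<equiv> (\<lambda>z. sinc (of_real \<epsilon> * z) * exp (of_real pi * \<i> * of_real (2 * B - \<epsilon>) * z))"
  defines "g \<equiv> (\<lambda>z. sinc (of_real \<epsilon> * z) * exp (- (of_real pi * \<i> * of_real (2 * B - \<epsilon>) * z)))"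
  shows "f \<in> PW2 B \<and> g \<in> PW2 B
    \<and> (\<forall>z. f z = of_real (1 / \<epsilon>) * integral\<^sup>L (lebesgue_on {-B..B})
          (\<lambda>\<xi>. indicator {B - \<epsilon>..B} \<xi> * exp (2 * of_real pi * \<i> * of_real \<xi> * z)))
    \<and> (\<forall>z. g z = of_real (1 / \<epsilon>) * integral\<^sup>L (lebesgue_on {-B..B})
          (\<lambda>\<xi>. indicator {-B..-B + \<epsilon>} \<xi> * exp (2 * of_real pi * \<i> * of_real \<xi> * z)))
    \<and> (\<forall>t::real. norm (f (of_real t)) = norm (g (of_real t)))
    \<and> (\<forall>t::real. f (of_real t) * cnj (f (of_real (t - c))) = g (of_real t) * cnj (g (of_real (t - c))))
    \<and> \<not> (\<exists>\<alpha>::real. f = (\<lambda>z. exp (\<i> * of_real \<alpha>) * g z))"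
proof -
  have f_transform: "f = (\<lambda>z. of_real (1 / \<epsilon>) * integral\<^sup>L (lebesgue_on {-B..B})
          (\<lambda>\<xi>. indicator {B - \<epsilon>..B} \<xi> * exp (2 * of_real pi * \<i> * of_real \<xi> * z)))"
  proof (rule ext)
    fix z
    have "B - (B - \<epsilon>) = \<epsilon>" "B - \<epsilon> + B = 2 * B - \<epsilon>"
      by simp_all
    then show "f z = of_real (1 / \<epsilon>) * integral\<^sup>L (lebesgue_on {-B..B})
          (\<lambda>\<xi>. indicator {B - \<epsilon>..B} \<xi> * exp (2 * of_real pi * \<i> * of_real \<xi> * z))"
      using assms(2,3) fourier_transform_indicator[of "B - \<epsilon>" B B z] by (simp add: f_def)
  qed
  have g_transform: "g = (\<lambda>z. of_real (1 / \<epsilon>) * integral\<^sup>L (lebesgue_on {-B..B})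
          (\<lambda>\<xi>. indicator {-B..-B + \<epsilon>} \<xi> * exp (2 * of_real pi * \<i> * of_real \<xi> * z)))"
  proof (rule ext)
    fix z
    have "-B + \<epsilon> - - B = \<epsilon>"
      "of_real pi * \<i> * of_real (- B + (- B + \<epsilon>)) * z = - (of_real pi * \<i> * of_real (2 * B - \<epsilon>) * z)"
      by (simp_all add: algebra_simps)
    note g_shape = fourier_transform_indicator[of "-B" "-B + \<epsilon>" B z, unfolded this]
    show "g z = of_real (1 / \<epsilon>) * integral\<^sup>L (lebesgue_on {-B..B})
          (\<lambda>\<xi>. indicator {-B..-B + \<epsilon>} \<xi> * exp (2 * of_real pi * \<i> * of_real \<xi> * z))"
      using assms(2,3) g_shape by (simp add: g_def)
  qed
  have "norm (f (of_real t)) = norm (g (of_real t))" for t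
    by (simp add: f_def g_def norm_mult norm_exp)
  moreover have "f (of_real t) * cnj (f (of_real (t - c))) = g (of_real t) * cnj (g (of_real (t - c)))" for t
    unfolding f_def g_def
    using assms(3) by (intro conjugate_modulations_same_autocorrelation) (auto simp: c_def intro!: sinc_in_Reals)
  moreover have "sinc (of_real \<epsilon> * \<i>) \<noteq> 0"
    unfolding sinc_eq_0_iff using assms(2) by (auto dest: arg_cong[where f = Im])
  then have "\<not> (\<exists>\<alpha>::real. f = (\<lambda>z. exp (\<i> * of_real \<alpha>) * g z))"
    unfolding f_def g_def using assms(3)
    by (intro conjugate_modulations_not_unimodular_multiple) (auto simp: sinc_def)
  ultimately show ?thesis
    by (simp add: f_transform g_transform indicator_fourier_transform_in_PW2 del: of_real_divide)
qed

end
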